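(* Let $\mathcal G$ be a weighted timed game and $\rho=(s_1,r_1)\xrightarrow{\delta_1}(s_2,r_2)\xrightarrow{\delta_2}\cdots\xrightarrow{\delta_n}(s_{n+1},r_{n+1})=(s_1,r_1)$ a cycle of the region automaton $\mathcal R(\mathcal G)$. Let $\overline\pi=(s_1,\nu_0)\xrightarrow{d_1,\delta_1}(s_2,\nu_1)\cdots\xrightarrow{d_n,\delta_n}(s_1,\nu_n)$ be a finite play of the closed game $\overline{\mathcal G}$ following $\overline\rho$ and jumping from corners to corners, with $\nu_0,\nu_n$ corners of $r_1$. Then for every $\varepsilon>0$ there exists a finite play $\pi$ of $\mathcal G$ following $\rho$ such that $|\omega(\pi)-\omega(\overline\pi)|\le\varepsilon$.
   Context: Clocks $X$, valuations $\nu\colon X\to\mathbb R_{\ge0}$, time elapse $\nu+d$, reset $\nu[Y\leftarrow0]$; guards are conjunctions of $x\bowtie c$ with ${\bowtie}\in\{\le,<,=,>,\ge\}$, $c\in\mathbb N$. A weighted timed game $\mathcal G=\langle S=S_{\mathrm{Min}}\uplus S_{\mathrm{Max}},S_T,\Delta,\omega\rangle$ has finite states, finite transitions $\Delta\subseteq S\times\mathrm{Guards}(X)\times2^X\times S$, weights $\omega\colon\Delta\uplus S\to\mathbb Z$, and clocks bounded by $M\in\mathbb N$ (every guard implies $\nu(x)\le M$ for all $x$). A step $(s,\nu)\xrightarrow{d,\delta}(s',\nu')$ with $\delta=(s,g,Y,s')$ requires $d\ge0$, $\nu+d\models g$, $\nu'=(\nu+d)[Y\leftarrow0]$, and has weight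 $d\,\omega(s)+\omega(\delta)$; the weight $\omega(\cdot)$ of a finite play is the sum of its step weights. Regions: standard Alur–Dill regions for clocks $X$ and constant $M$; $[\nu]$ is the region of $\nu$; $\overline r$ is the topological closure of $r$; the corners of $r$ are the valuations in $\overline r\cap\mathbb N^X$. The region automaton $\mathcal R(\mathcal G)$ has states $(s,r)$ and transitions $(s,r)\xrightarrow{\delta}(s',r')$, $\delta=(s,g,Y,s')$, if some $\nu\in r$, $d\ge0$ satisfy $\nu+d\models g$ and $(\nu+d)[Y\leftarrow0]\in r'$; a cycle is a path whose first and last states coincide. A play of $\mathcal G$ follows a path if it fires the same transitions and its successive configurations $(s,\nu)$ have $(s,[\nu])$ equal to the successive states of the path. The closed game $\overline{\mathcal G}$ is $\mathcal G$ with every strict inequality in guards replaced by the corresponding non-strict one. The play $\overline\pi$ of $\overline{\mathcal G}$ follows $\overline\rho$ and jumps from corners to corners if, for each $i\in\{1,\dots,n\}$, writing $\delta_i=(s_i,g_i,Y_i,s_{i+1})$, there is a region $r_i''$ such that some valuation of $r_i$ reaches $r_i''$ by time elapse, $r_i''$ satisfies $g_i$, $r_i''[Y_i\leftarrow0]=r_{i+1}$, and $\nu_{i-1}\in\overline{r_i}$, $\nu_{i-1}+d_i\in\overline{r_i''}$, $\nu_i\in\overline{r_{i+1}}$, with all valuations $\nu_{i-1},\nu_{i-1}+d_i,\nu_i$ in $\mathbb N^X$ (hence $\omega(\overline\pi)\in\mathbb Z$). *)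

theory Defs
  imports "HOL-Analysis.Analysis"
begin

type_synonym 'c valuation = "'c \<Rightarrow> real"

definition nonneg_val :: "'c valuation \<Rightarrow> bool" where
  "nonneg_val \<nu> \<longleftrightarrow> (\<forall>x. 0 \<le> \<nu> x)"

definition delay :: "'c valuation \<Rightarrow> real \<Rightarrow> 'c valuation" where
  "delay \<nu> d = (\<lambda>x. \<nu> x + d)"

definition reset :: "'c valuation \<Rightarrow> 'c set \<Rightarrow> 'c valuation" where
  "reset \<nu> Y = (\<lambda>x. if x \<in> Y then 0 else \<nu> x)"

datatype cmp = Lt | Le | Eq | Ge | Gt

type_synonym 'c guard = "('c \<times> cmp \<times> nat) list"

fun sat_cmp :: "real \<Rightarrow> cmp \<Rightarrow> nat \<Rightarrow> bool" where
  "sat_cmp v Lt c = (v < real c)"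
| "sat_cmp v Le c = (v \<le> real c)"
| "sat_cmp v Eq c = (v = real c)"
| "sat_cmp v Ge c = (v \<ge> real c)"
| "sat_cmp v Gt c = (v > real c)"

definition sat :: "'c valuation \<Rightarrow> 'c guard \<Rightarrow> bool" where
  "sat \<nu> g \<longleftrightarrow> (\<forall>(x, b, c) \<in> set g. sat_cmp (\<nu> x) b c)"

fun close_cmp :: "cmp \<Rightarrow> cmp" where
  "close_cmp Lt = Le"
| "close_cmp Gt = Ge"
| "close_cmp b = b"

definition close_guard :: "'c guard \<Rightarrow> 'c guard" where
  "close_guard g = map (\<lambda>(x, b, c). (x, close_cmp b, c)) g"

type_synonym ('s, 'c) transition = "'s \<times> 'c guard \<times> 'c set \<times> 's"

record ('s, 'c) wtg =
  Smin :: "'s set"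
  Smax :: "'s set"
  Starget :: "'s set"
  Trans :: "('s, 'c) transition set"
  wstate :: "'s \<Rightarrow> int"
  wtrans :: "('s, 'c) transition \<Rightarrow> int"

definition states :: "('s, 'c) wtg \<Rightarrow> 's set" where
  "states G = Smin G \<union> Smax G"

definition guard_of :: "('s, 'c) transition \<Rightarrow> 'c guard" where
  "guard_of \<delta> = fst (snd \<delta>)"

definition resets_of :: "('s, 'c) transition \<Rightarrow> 'c set" where
  "resets_of \<delta> = fst (snd (snd \<delta>))"

definition src :: "('s, 'c) transition \<Rightarrow> 's" where
  "src \<delta> = fst \<delta>"

definition tgt :: "('s, 'c) transition \<Rightarrow> 's" where
  "tgt \<delta> = snd (snd (snd \<delta>))"

definition wf_wtg :: "('s, 'c::finite) wtg \<Rightarrow> nat \<Rightarrow> bool" where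
  "wf_wtg G M \<longleftrightarrow>
     finite (Smin G) \<and> finite (Smax G) \<and> Smin G \<inter> Smax G = {} \<and>
     Starget G \<subseteq> states G \<and> finite (Trans G) \<and>
     (\<forall>\<delta> \<in> Trans G. src \<delta> \<in> states G \<and> tgt \<delta> \<in> states G) \<and>
     (\<forall>\<delta> \<in> Trans G. \<forall>\<nu>. sat \<nu> (guard_of \<delta>) \<longrightarrow> (\<forall>x. \<nu> x \<le> real M))"

(* a step (s,\<nu>) --d,\<delta>--> (s',\<nu>'); the flag cl selects the closed game \<overline>G,
   where each guard is replaced by its closure (same transitions, same weights) *)
definition step :: "bool \<Rightarrow> ('s, 'c) wtg \<Rightarrow> 's \<Rightarrow> 'c valuation \<Rightarrow> real \<Rightarrow> ('s, 'c) transition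
                     \<Rightarrow> 's \<Rightarrow> 'c valuation \<Rightarrow> bool" where
  "step cl G s \<nu> d \<delta> s' \<nu>' \<longleftrightarrow>
     \<delta> \<in> Trans G \<and> src \<delta> = s \<and> tgt \<delta> = s' \<and> d \<ge> 0 \<and>
     sat (delay \<nu> d) (if cl then close_guard (guard_of \<delta>) else guard_of \<delta>) \<and>
     \<nu>' = reset (delay \<nu> d) (resets_of \<delta>)"

definition play_weight :: "('s, 'c) wtg \<Rightarrow> nat \<Rightarrow> (nat \<Rightarrow> 's) \<Rightarrow> (nat \<Rightarrow> real)
                            \<Rightarrow> (nat \<Rightarrow> ('s, 'c) transition) \<Rightarrow> real" where
  "play_weight G n ss ds \<delta>s =
     (\<Sum>i = 1..n. ds i * real_of_int (wstate G (ss i)) + real_of_int (wtrans G (\<delta>s i)))"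

(* valuations \<nu>_0..\<nu>_n, delays d_1..d_n: a finite play of the game (closed if cl)
   through states s_1..s_{n+1} firing \<delta>_1..\<delta>_n *)
definition is_play :: "bool \<Rightarrow> ('s, 'c) wtg \<Rightarrow> nat \<Rightarrow> (nat \<Rightarrow> 's) \<Rightarrow> (nat \<Rightarrow> ('s, 'c) transition)
                        \<Rightarrow> (nat \<Rightarrow> 'c valuation) \<Rightarrow> (nat \<Rightarrow> real) \<Rightarrow> bool" where
  "is_play cl G n ss \<delta>s \<nu>s ds \<longleftrightarrow>
     nonneg_val (\<nu>s 0) \<and>
     (\<forall>i \<in> {1..n}. step cl G (ss i) (\<nu>s (i - 1)) (ds i) (\<delta>s i) (ss (Suc i)) (\<nu>s i))"

definition region_equiv :: "nat \<Rightarrow> 'c valuation \<Rightarrow> 'c valuation \<Rightarrow> bool" where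
  "region_equiv M \<nu> \<nu>' \<longleftrightarrow>
     (\<forall>x. (\<nu> x > real M \<longleftrightarrow> \<nu>' x > real M)) \<and>
     (\<forall>x. \<nu> x \<le> real M \<longrightarrow>
          \<lfloor>\<nu> x\<rfloor> = \<lfloor>\<nu>' x\<rfloor> \<and> (frac (\<nu> x) = 0 \<longleftrightarrow> frac (\<nu>' x) = 0)) \<and>
     (\<forall>x y. \<nu> x \<le> real M \<longrightarrow> \<nu> y \<le> real M \<longrightarrow>
          (frac (\<nu> x) \<le> frac (\<nu> y) \<longleftrightarrow> frac (\<nu>' x) \<le> frac (\<nu>' y)))"

definition region_of :: "nat \<Rightarrow> 'c valuation \<Rightarrow> 'c valuation set" where
  "region_of M \<nu> = {\<nu>'. nonneg_val \<nu>' \<and> region_equiv M \<nu> \<nu>'}"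

definition regions :: "nat \<Rightarrow> 'c valuation set set" where
  "regions M = {region_of M \<nu> | \<nu>. nonneg_val \<nu>}"

definition int_val :: "'c valuation \<Rightarrow> bool" where
  "int_val \<nu> \<longleftrightarrow> (\<forall>x. \<nu> x \<in> \<int>)"

definition is_corner :: "'c valuation \<Rightarrow> 'c valuation set \<Rightarrow> bool" where
  "is_corner \<nu> r \<longleftrightarrow> \<nu> \<in> closure r \<and> int_val \<nu>"

definition reg_trans :: "('s, 'c) wtg \<Rightarrow> nat \<Rightarrow> 's \<Rightarrow> 'c valuation set \<Rightarrow> ('s, 'c) transition
                          \<Rightarrow> 's \<Rightarrow> 'c valuation set \<Rightarrow> bool" where
  "reg_trans G M s r \<delta> s' r' \<longleftrightarrow>
     \<delta> \<in> Trans G \<and> src \<delta> = s \<and> tgt \<delta> = s' \<and> r \<in> regions M \<and> r' \<in> regions M \<and>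
     (\<exists>\<nu> \<in> r. \<exists>d \<ge> 0. sat (delay \<nu> d) (guard_of \<delta>) \<and> reset (delay \<nu> d) (resets_of \<delta>) \<in> r')"

definition is_region_cycle :: "('s, 'c) wtg \<Rightarrow> nat \<Rightarrow> nat \<Rightarrow> (nat \<Rightarrow> 's) \<Rightarrow> (nat \<Rightarrow> 'c valuation set)
                                \<Rightarrow> (nat \<Rightarrow> ('s, 'c) transition) \<Rightarrow> bool" where
  "is_region_cycle G M n ss rs \<delta>s \<longleftrightarrow>
     ss (Suc n) = ss 1 \<and> rs (Suc n) = rs 1 \<and> rs 1 \<in> regions M \<and>
     (\<forall>i \<in> {1..n}. reg_trans G M (ss i) (rs i) (\<delta>s i) (ss (Suc i)) (rs (Suc i)))"

definition follows :: "nat \<Rightarrow> nat \<Rightarrow> (nat \<Rightarrow> 'c valuation set) \<Rightarrow> (nat \<Rightarrow> 'c valuation) \<Rightarrow> bool" where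
  "follows M n rs \<nu>s \<longleftrightarrow> (\<forall>i \<in> {1..Suc n}. region_of M (\<nu>s (i - 1)) = rs i)"

definition follows_corners :: "('s, 'c) wtg \<Rightarrow> nat \<Rightarrow> nat \<Rightarrow> (nat \<Rightarrow> 'c valuation set)
      \<Rightarrow> (nat \<Rightarrow> ('s, 'c) transition) \<Rightarrow> (nat \<Rightarrow> 'c valuation) \<Rightarrow> (nat \<Rightarrow> real) \<Rightarrow> bool" where
  "follows_corners G M n rs \<delta>s \<nu>s ds \<longleftrightarrow>
     (\<forall>i \<in> {1..n}. \<exists>r'' \<in> regions M.
        (\<exists>\<nu> \<in> rs i. \<exists>d \<ge> 0. delay \<nu> d \<in> r'') \<and>
        (\<forall>\<nu> \<in> r''. sat \<nu> (guard_of (\<delta>s i))) \<and>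
        (\<lambda>\<nu>. reset \<nu> (resets_of (\<delta>s i))) ` r'' = rs (Suc i) \<and>
        \<nu>s (i - 1) \<in> closure (rs i) \<and> delay (\<nu>s (i - 1)) (ds i) \<in> closure r'' \<and>
        \<nu>s i \<in> closure (rs (Suc i)) \<and>
        int_val (\<nu>s (i - 1)) \<and> int_val (delay (\<nu>s (i - 1)) (ds i)) \<and> int_val (\<nu>s i))"

end

theory Submission
  imports Defs
begin

text \<open>A region is convex, and it contains every point of the half-open segment from one of its
points towards a point of its closure: the closure is cut out by the non-strict versions of the
constraints defining the region, and a convex combination putting positive weight on a point that
satisfies the strict constraints satisfies them as well. Delays and resets are affine, so if \<pi> is
any play of the game following the region cycle and \<pi>' is the corner play of the closed game, then
for every \<open>t < 1\<close> the pointwise combination \<open>(1 - t) \<pi> + t \<pi>'\<close> is again a play following the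
cycle, of weight \<open>(1 - t) \<omega>(\<pi>) + t \<omega>(\<pi>')\<close>, which tends to \<open>\<omega>(\<pi>')\<close> as \<open>t \<rightarrow> 1\<close>. A play \<pi> exists
because region-equivalent valuations can delay into the same regions.\<close>

lemma gt_nat_iff_floor_frac:
  fixes a b :: real
  assumes "\<lfloor>a\<rfloor> = \<lfloor>b\<rfloor>" "frac a = 0 \<longleftrightarrow> frac b = 0"
  shows "real M < a \<longleftrightarrow> real M < b"
proof -
  have "\<lceil>a\<rceil> = \<lceil>b\<rceil>" using assms unfolding ceiling_altdef frac_def by simp
  then show ?thesis by (metis ceiling_le_iff not_le of_int_of_nat_eq)
qed

lemma convex_comb_less:
  fixes a b a' b' t :: real
  assumes "a < b" "a' \<le> b'" "0 \<le> t" "t < 1"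
  shows "(1 - t) * a + t * a' < (1 - t) * b + t * b'"
  using assms by (smt (verit) mult_left_mono mult_strict_left_mono)

lemma convex_comb_le:
  fixes a b a' b' t :: real
  assumes "a \<le> b" "a' \<le> b'" "0 \<le> t" "t \<le> 1"
  shows "(1 - t) * a + t * a' \<le> (1 - t) * b + t * b'"
  using assms by (smt (verit) mult_left_mono)

lemma convex_comb_close:
  fixes a b \<epsilon> :: real
  assumes "0 < \<epsilon>"
  shows "\<exists>t. 0 \<le> t \<and> t < 1 \<and> \<bar>(1 - t) * a + t * b - b\<bar> \<le> \<epsilon>"
proof -
  define s where "s = min 1 (\<epsilon> / (\<bar>a - b\<bar> + 1))"
  have s: "0 < s" "s \<le> 1" using assms by (auto simp: s_def)
  have "(1 - (1 - s)) * a + (1 - s) * b - b = s * (a - b)" by (simp add: algebra_simps)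
  then have "\<bar>(1 - (1 - s)) * a + (1 - s) * b - b\<bar> = s * \<bar>a - b\<bar>"
    using s by (simp add: abs_mult)
  also have "\<dots> \<le> \<epsilon> / (\<bar>a - b\<bar> + 1) * (\<bar>a - b\<bar> + 1)"
    using assms by (intro mult_mono) (auto simp: s_def)
  also have "\<dots> = \<epsilon>" by simp
  finally show ?thesis using s by (intro exI[of _ "1 - s"]) auto
qed

lemma exists_between_finite:
  fixes L U :: "real set"
  assumes "finite L" "finite U" "L \<noteq> {}" "U \<noteq> {}" "\<And>l u. l \<in> L \<Longrightarrow> u \<in> U \<Longrightarrow> l < u"
  shows "\<exists>b. (\<forall>l\<in>L. l < b) \<and> (\<forall>u\<in>U. b < u)"
proof -
  have gap: "Max L < Min U" using assms by simp
  show ?thesis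
  proof (intro exI conjI ballI)
    show "l < (Max L + Min U) / 2" if "l \<in> L" for l
      using Max_ge[OF assms(1) that] gap by (simp add: field_simps)
    show "(Max L + Min U) / 2 < u" if "u \<in> U" for u
      using Min_le[OF assms(2) that] gap by (simp add: field_simps)
  qed
qed

section \<open>Regions and their closures\<close>

lemma region_equiv_refl: "region_equiv M \<nu> \<nu>"
  by (simp add: region_equiv_def)

lemma region_equiv_sym: "region_equiv M \<nu> \<mu> \<Longrightarrow> region_equiv M \<mu> \<nu>"
  unfolding region_equiv_def by (metis not_le)

lemma region_equiv_trans:
  "region_equiv M \<nu> \<mu> \<Longrightarrow> region_equiv M \<mu> \<eta> \<Longrightarrow> region_equiv M \<nu> \<eta>"
  unfolding region_equiv_def by (metis not_le)

lemma mem_region_of_self: "nonneg_val \<nu> \<Longrightarrow> \<nu> \<in> region_of M \<nu>"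
  by (simp add: region_of_def region_equiv_refl)

lemma region_equiv_of_mem_region:
  assumes "r \<in> regions M" "u \<in> r" "v \<in> r"
  shows "region_equiv M u v" "nonneg_val v"
  using assms by (auto simp: regions_def region_of_def intro: region_equiv_trans[OF region_equiv_sym])

lemma region_of_mem_region:
  assumes "r \<in> regions M" "v \<in> r"
  shows "region_of M v = r"
  using assms by (auto simp: regions_def region_of_def
      intro: region_equiv_trans[OF region_equiv_sym] region_equiv_trans)

definition closed_region_equiv :: "nat \<Rightarrow> 'c valuation \<Rightarrow> 'c valuation \<Rightarrow> bool" where
  "closed_region_equiv M u v \<longleftrightarrow>
     nonneg_val v \<and>
     (\<forall>x. real M < u x \<longrightarrow> real M \<le> v x) \<and>
     (\<forall>x. u x \<le> real M \<longrightarrow>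
        of_int \<lfloor>u x\<rfloor> \<le> v x \<and> v x \<le> of_int \<lfloor>u x\<rfloor> + 1 \<and> (frac (u x) = 0 \<longrightarrow> v x = u x)) \<and>
     (\<forall>x y. u x \<le> real M \<longrightarrow> u y \<le> real M \<longrightarrow> frac (u x) \<le> frac (u y) \<longrightarrow>
        v x - of_int \<lfloor>u x\<rfloor> \<le> v y - of_int \<lfloor>u y\<rfloor>)"

lemma closed_Collect_closed_region_equiv: "closed {v. closed_region_equiv M u v}"
  unfolding closed_region_equiv_def nonneg_val_def
  by (intro closed_Collect_conj closed_Collect_all closed_Collect_imp closed_Collect_le
      closed_Collect_eq open_Collect_const continuous_intros continuous_on_product_coordinates)

lemma region_equiv_imp_closed:
  assumes "region_equiv M u v" "nonneg_val v"
  shows "closed_region_equiv M u v"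
proof -
  have "\<lfloor>v x\<rfloor> = \<lfloor>u x\<rfloor>" "frac (v x) = 0 \<longleftrightarrow> frac (u x) = 0" if "u x \<le> real M" for x
    using assms(1) that by (auto simp: region_equiv_def)
  then have "v x - of_int \<lfloor>u x\<rfloor> = frac (v x)" "frac (u x) = 0 \<longrightarrow> v x = u x"
    if "u x \<le> real M" for x
    using that by (simp_all add: frac_def) metis
  then show ?thesis
    using assms frac_ge_0 frac_lt_1 unfolding region_equiv_def closed_region_equiv_def
    by (smt (verit))
qed

lemma closure_region_closed_region_equiv:
  assumes "r \<in> regions M" "u \<in> r" "v \<in> closure r"
  shows "closed_region_equiv M u v"
proof -
  have "r \<subseteq> {v. closed_region_equiv M u v}"
    using assms(1,2) region_equiv_of_mem_region region_equiv_imp_closed by blast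
  then have "closure r \<subseteq> {v. closed_region_equiv M u v}"
    by (rule closure_minimal) (rule closed_Collect_closed_region_equiv)
  then show ?thesis using assms(3) by blast
qed

lemma floor_frac_convex_comb:
  fixes a b t :: real
  assumes b: "of_int \<lfloor>a\<rfloor> \<le> b" "b \<le> of_int \<lfloor>a\<rfloor> + 1" "frac a = 0 \<longrightarrow> b = a"
    and t: "0 \<le> t" "t < 1"
  shows "\<lfloor>(1 - t) * a + t * b\<rfloor> = \<lfloor>a\<rfloor>" and "frac ((1 - t) * a + t * b) = 0 \<longleftrightarrow> frac a = 0"
proof -
  let ?m = "of_int \<lfloor>a\<rfloor> :: real" and ?w = "(1 - t) * a + t * b"
  have shift: "?w - ?m = (1 - t) * (a - ?m) + t * (b - ?m)" by (simp add: algebra_simps)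
  have frac_a: "frac a = a - ?m" by (simp add: frac_def)
  have "0 \<le> ?w - ?m"
    unfolding shift using convex_comb_le[of 0 "a - ?m" 0 "b - ?m" t] b t frac_ge_0[of a] frac_a by simp
  moreover have "?w - ?m < 1"
    unfolding shift using convex_comb_less[of "a - ?m" 1 "b - ?m" 1 t] b t frac_lt_1[of a] frac_a
    by simp
  ultimately show floor: "\<lfloor>?w\<rfloor> = \<lfloor>a\<rfloor>" by linarith
  show "frac ?w = 0 \<longleftrightarrow> frac a = 0"
  proof (cases "frac a = 0")
    case True
    then show ?thesis using b by (simp add: algebra_simps)
  next
    case False
    then have "0 < a - ?m" using frac_ge_0[of a] frac_a by linarith
    then have "0 < ?w - ?m"
      unfolding shift using convex_comb_less[of 0 "a - ?m" 0 "b - ?m" t] b t by simp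
    then show ?thesis using False floor by (simp add: frac_def)
  qed
qed

lemma region_equiv_convex_comb:
  assumes "closed_region_equiv M u v" and t: "0 \<le> t" "t < 1"
  shows "region_equiv M u (\<lambda>x. (1 - t) * u x + t * v x)"
proof -
  define w where "w x = (1 - t) * u x + t * v x" for x
  note v = assms(1)[unfolded closed_region_equiv_def]
  have floor_eq: "\<lfloor>w x\<rfloor> = \<lfloor>u x\<rfloor>" and frac_zero: "frac (w x) = 0 \<longleftrightarrow> frac (u x) = 0"
    if "u x \<le> real M" for x
    using floor_frac_convex_comb[of "u x" "v x" t] v that t unfolding w_def by auto
  have "real M < w x" if "real M < u x" for x
  proof -
    have "real M \<le> v x" using v that by blast
    from convex_comb_less[OF that this t] show ?thesis
      unfolding w_def by (simp add: algebra_simps)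
  qed
  moreover have "w x \<le> real M" if "u x \<le> real M" for x
    using gt_nat_iff_floor_frac[of "w x" "u x" M] floor_eq[OF that] frac_zero[OF that] that by simp
  ultimately have above: "real M < u x \<longleftrightarrow> real M < w x" for x
    by (meson not_le)
  have frac_le: "frac (u x) \<le> frac (u y) \<longleftrightarrow> frac (w x) \<le> frac (w y)"
    if "u x \<le> real M" "u y \<le> real M" for x y
  proof -
    let ?mx = "of_int \<lfloor>u x\<rfloor> :: real" and ?my = "of_int \<lfloor>u y\<rfloor> :: real"
    have diff: "frac (w x) - frac (w y) =
        (1 - t) * (frac (u x) - frac (u y)) + t * ((v x - ?mx) - (v y - ?my))"
      using floor_eq[OF that(1)] floor_eq[OF that(2)] by (simp add: w_def frac_def algebra_simps)
    show ?thesis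
    proof (cases "frac (u x) \<le> frac (u y)")
      case True
      then have "v x - ?mx \<le> v y - ?my" using v that by blast
      then have "frac (w x) - frac (w y) \<le> 0"
        using convex_comb_le[of "frac (u x) - frac (u y)" 0 _ 0 t] True t unfolding diff by simp
      then show ?thesis using True by simp
    next
      case False
      then have "v y - ?my \<le> v x - ?mx" using v that by force
      then have "0 < frac (w x) - frac (w y)"
        using convex_comb_less[of 0 "frac (u x) - frac (u y)" 0 _ t] False t unfolding diff by simp
      then show ?thesis using False by simp
    qed
  qed
  show ?thesis
    unfolding region_equiv_def w_def[symmetric] using above floor_eq frac_zero frac_le by simp
qed

lemma convex_comb_mem_region:
  assumes r: "r \<in> regions M" and "u \<in> r" "v \<in> closure r" and t: "0 \<le> t" "t < 1"
  shows "(\<lambda>x. (1 - t) * u x + t * v x) \<in> r"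
proof -
  have v: "closed_region_equiv M u v"
    using closure_region_closed_region_equiv assms by blast
  have "nonneg_val u" using region_equiv_of_mem_region(2)[OF r] assms by blast
  then have "nonneg_val (\<lambda>x. (1 - t) * u x + t * v x)"
    using v t unfolding nonneg_val_def closed_region_equiv_def by simp
  with region_equiv_convex_comb[OF v t] have "(\<lambda>x. (1 - t) * u x + t * v x) \<in> region_of M u"
    by (simp add: region_of_def)
  then show ?thesis using region_of_mem_region[OF r] assms by simp
qed

section \<open>Delays preserve region equivalence\<close>

lemma region_equiv_delay_nat:
  assumes "region_equiv M \<mu> \<nu>"
  shows "region_equiv M (delay \<mu> (real k)) (delay \<nu> (real k))"
proof -
  have shift: "\<lfloor>z + real k\<rfloor> = \<lfloor>z\<rfloor> + int k" "frac (z + real k) = frac z" for z :: real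
    by (simp_all add: frac_def)
  have "real M < \<mu> x + real k \<longleftrightarrow> real M < \<nu> x + real k" for x
  proof (cases "\<mu> x \<le> real M")
    case True
    then show ?thesis
      using assms gt_nat_iff_floor_frac[of "\<mu> x + real k" "\<nu> x + real k" M]
      unfolding region_equiv_def shift by simp
  next
    case False
    then show ?thesis using assms unfolding region_equiv_def by (smt (verit) of_nat_0_le_iff)
  qed
  then show ?thesis
    using assms unfolding region_equiv_def delay_def shift
    by (smt (verit) of_nat_0_le_iff)
qed

lemma region_equiv_threshold_between:
  fixes \<mu> \<nu> :: "'c::finite valuation" and a :: real
  assumes eq: "region_equiv M \<mu> \<nu>" and a: "0 < a" "a < 1"
    and no_hit: "\<And>x. \<mu> x \<le> real M \<Longrightarrow> frac (\<mu> x) \<noteq> a"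
  shows "\<exists>b. 0 < b \<and> b < 1 \<and>
    (\<forall>x. \<mu> x \<le> real M \<longrightarrow> (frac (\<mu> x) < a \<longleftrightarrow> frac (\<nu> x) < b) \<and> frac (\<nu> x) \<noteq> b)"
proof -
  define L where "L = insert 0 ((\<lambda>x. frac (\<nu> x)) ` {x. \<mu> x \<le> real M \<and> frac (\<mu> x) < a})"
  define U where "U = insert 1 ((\<lambda>x. frac (\<nu> x)) ` {x. \<mu> x \<le> real M \<and> a < frac (\<mu> x)})"
  have pos: "0 < frac (\<nu> y)" if "\<mu> y \<le> real M" "a < frac (\<mu> y)" for y
  proof -
    have "frac (\<mu> y) \<noteq> 0" using that(2) a by linarith
    then have "frac (\<nu> y) \<noteq> 0" using eq that(1) unfolding region_equiv_def by blast
    then show ?thesis using frac_ge_0[of "\<nu> y"] by linarith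
  qed
  have lt: "frac (\<nu> x) < frac (\<nu> y)"
    if "\<mu> x \<le> real M" "frac (\<mu> x) < a" "\<mu> y \<le> real M" "a < frac (\<mu> y)" for x y
  proof -
    have "frac (\<mu> y) \<le> frac (\<mu> x) \<longleftrightarrow> frac (\<nu> y) \<le> frac (\<nu> x)"
      using eq that(1,3) unfolding region_equiv_def by blast
    then show ?thesis using that(2,4) by linarith
  qed
  have "l < u" if "l \<in> L" "u \<in> U" for l u
  proof -
    from that(1) obtain x where "l = 0 \<or> (l = frac (\<nu> x) \<and> \<mu> x \<le> real M \<and> frac (\<mu> x) < a)"
      unfolding L_def by blast
    moreover from that(2) obtain y where "u = 1 \<or> (u = frac (\<nu> y) \<and> \<mu> y \<le> real M \<and> a < frac (\<mu> y))"
      unfolding U_def by blast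
    ultimately show ?thesis
      by (elim disjE conjE) (simp_all add: pos lt frac_lt_1 del: frac_gt_0_iff)
  qed
  moreover have "finite L" "finite U" "L \<noteq> {}" "U \<noteq> {}" unfolding L_def U_def by auto
  ultimately obtain b where L: "\<And>l. l \<in> L \<Longrightarrow> l < b" and U: "\<And>u. u \<in> U \<Longrightarrow> b < u"
    using exists_between_finite[of L U] by blast
  have "(frac (\<mu> x) < a \<longleftrightarrow> frac (\<nu> x) < b) \<and> frac (\<nu> x) \<noteq> b" if "\<mu> x \<le> real M" for x
  proof (cases "frac (\<mu> x) < a")
    case True
    then have "frac (\<nu> x) < b" using that L unfolding L_def by blast
    then show ?thesis using True by simp
  next
    case False
    then have "a < frac (\<mu> x)" using no_hit[OF that] by simp
    then have "b < frac (\<nu> x)" using that U unfolding U_def by blast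
    then show ?thesis using False by simp
  qed
  moreover have "0 < b" "b < 1" using L U unfolding L_def U_def by blast+
  ultimately show ?thesis by blast
qed

lemma region_equiv_threshold:
  fixes \<mu> \<nu> :: "'c::finite valuation" and a :: real
  assumes eq: "region_equiv M \<mu> \<nu>" and a: "0 < a" "a \<le> 1"
  shows "\<exists>b. 0 < b \<and> b \<le> 1 \<and> (b = 1 \<longleftrightarrow> a = 1) \<and>
     (\<forall>x. \<mu> x \<le> real M \<longrightarrow>
        (frac (\<mu> x) < a \<longleftrightarrow> frac (\<nu> x) < b) \<and> (frac (\<mu> x) = a \<longleftrightarrow> frac (\<nu> x) = b))"
proof -
  have ord: "frac (\<mu> x) \<le> frac (\<mu> y) \<longleftrightarrow> frac (\<nu> x) \<le> frac (\<nu> y)"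
    if "\<mu> x \<le> real M" "\<mu> y \<le> real M" for x y
    using eq that unfolding region_equiv_def by blast
  have frac_ne_1: "frac z \<noteq> 1" for z :: real using frac_lt_1[of z] by simp
  consider (hit) x0 where "\<mu> x0 \<le> real M" "frac (\<mu> x0) = a"
    | (one) "a = 1"
    | (between) "a < 1" "\<And>x. \<mu> x \<le> real M \<Longrightarrow> frac (\<mu> x) \<noteq> a"
    using a by fastforce
  then show ?thesis
  proof cases
    case hit
    then have "frac (\<mu> x0) \<noteq> 0" using a by simp
    then have "frac (\<nu> x0) \<noteq> 0" using eq hit(1) unfolding region_equiv_def by blast
    then have "0 < frac (\<nu> x0)" using frac_ge_0[of "\<nu> x0"] by linarith
    moreover have "(frac (\<mu> x) < a \<longleftrightarrow> frac (\<nu> x) < frac (\<nu> x0)) \<and>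
        (frac (\<mu> x) = a \<longleftrightarrow> frac (\<nu> x) = frac (\<nu> x0))" if "\<mu> x \<le> real M" for x
      using ord[OF that hit(1)] ord[OF hit(1) that] hit(2) by auto
    ultimately show ?thesis
      using hit(2) frac_lt_1[of "\<nu> x0"] frac_ne_1 by (intro exI[of _ "frac (\<nu> x0)"]) auto
  next
    case one
    then show ?thesis using frac_lt_1 frac_ne_1 by (intro exI[of _ 1]) auto
  next
    case between
    then obtain b where "0 < b" "b < 1" and "\<forall>x. \<mu> x \<le> real M \<longrightarrow>
        (frac (\<mu> x) < a \<longleftrightarrow> frac (\<nu> x) < b) \<and> frac (\<nu> x) \<noteq> b"
      using region_equiv_threshold_between[OF eq a(1)] by blast
    then show ?thesis using between by (intro exI[of _ b]) auto
  qed
qed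

lemma delay_floor_frac:
  assumes "0 \<le> h" "h < 1"
  shows "\<lfloor>delay \<nu> h x\<rfloor> = (if frac (\<nu> x) + h < 1 then \<lfloor>\<nu> x\<rfloor> else \<lfloor>\<nu> x\<rfloor> + 1)"
    and "frac (delay \<nu> h x) = (if frac (\<nu> x) + h < 1 then frac (\<nu> x) + h else frac (\<nu> x) + h - 1)"
  using assms by (simp_all add: delay_def floor_add frac_add frac_eq floor_eq_iff)

lemma region_equiv_delay_lt_1_matching:
  fixes \<mu> \<nu> :: "'c::finite valuation"
  assumes eq: "region_equiv M \<mu> \<nu>" and f: "0 \<le> f" "f < 1" and g: "0 \<le> g" "g < 1"
    and zero: "f = 0 \<longleftrightarrow> g = 0"
    and wrap: "\<And>x. \<mu> x \<le> real M \<Longrightarrow> frac (\<mu> x) + f < 1 \<longleftrightarrow> frac (\<nu> x) + g < 1"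
    and hit: "\<And>x. \<mu> x \<le> real M \<Longrightarrow> frac (\<mu> x) + f = 1 \<longleftrightarrow> frac (\<nu> x) + g = 1"
  shows "region_equiv M (delay \<mu> f) (delay \<nu> g)"
proof -
  have floor_eq: "\<lfloor>\<nu> x\<rfloor> = \<lfloor>\<mu> x\<rfloor>" and zero_iff: "frac (\<nu> x) = 0 \<longleftrightarrow> frac (\<mu> x) = 0"
    if "\<mu> x \<le> real M" for x
    using eq that unfolding region_equiv_def by auto
  have ord: "frac (\<mu> x) \<le> frac (\<mu> y) \<longleftrightarrow> frac (\<nu> x) \<le> frac (\<nu> y)"
    if "\<mu> x \<le> real M" "\<mu> y \<le> real M" for x y
    using eq that unfolding region_equiv_def by blast
  note \<mu>_split = delay_floor_frac[OF f, of \<mu>] and \<nu>_split = delay_floor_frac[OF g, of \<nu>]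
  have floor_delay: "\<lfloor>delay \<mu> f x\<rfloor> = \<lfloor>delay \<nu> g x\<rfloor>" if "\<mu> x \<le> real M" for x
    unfolding \<mu>_split \<nu>_split using floor_eq[OF that] wrap[OF that] by simp
  have zero_delay: "frac (delay \<mu> f x) = 0 \<longleftrightarrow> frac (delay \<nu> g x) = 0" if "\<mu> x \<le> real M" for x
  proof -
    have "frac (\<mu> x) + f = 0 \<longleftrightarrow> frac (\<nu> x) + g = 0"
      using zero_iff[OF that] zero f(1) g(1) frac_ge_0[of "\<mu> x"] frac_ge_0[of "\<nu> x"]
      by (smt (verit))
    then show ?thesis
      unfolding \<mu>_split(2) \<nu>_split(2) using wrap[OF that] hit[OF that] by (simp del: frac_eq_0_iff)
  qed
  have above: "real M < delay \<mu> f x \<longleftrightarrow> real M < delay \<nu> g x" for x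
  proof (cases "\<mu> x \<le> real M")
    case True
    then show ?thesis using gt_nat_iff_floor_frac[OF floor_delay zero_delay] by blast
  next
    case False
    then have "real M < \<nu> x" using eq unfolding region_equiv_def by auto
    then show ?thesis using False f g by (simp add: delay_def)
  qed
  have ord_delay: "frac (delay \<mu> f x) \<le> frac (delay \<mu> f y) \<longleftrightarrow> frac (delay \<nu> g x) \<le> frac (delay \<nu> g y)"
    if "\<mu> x \<le> real M" "\<mu> y \<le> real M" for x y
    unfolding \<mu>_split(2) \<nu>_split(2)
    using ord[OF that] wrap[OF that(1)] wrap[OF that(2)] frac_lt_1[of "\<mu> x"] frac_lt_1[of "\<mu> y"]
      frac_lt_1[of "\<nu> x"] frac_lt_1[of "\<nu> y"] frac_ge_0[of "\<mu> x"] frac_ge_0[of "\<nu> x"]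
      frac_ge_0[of "\<mu> y"] frac_ge_0[of "\<nu> y"] f g
    by (auto simp del: frac_ge_0)
  have "delay \<mu> f x \<le> real M \<Longrightarrow> \<mu> x \<le> real M" for x
    using f by (simp add: delay_def)
  then show ?thesis
    unfolding region_equiv_def using above floor_delay zero_delay ord_delay by blast
qed

text \<open>A clock crosses an integer during a delay \<open>f < 1\<close> iff its fractional part is at least
\<open>1 - f\<close>; the threshold lemma yields a delay \<open>g\<close> during which exactly the corresponding clocks
of \<open>\<nu>\<close> cross.\<close>

lemma region_equiv_delay_lt_1:
  fixes \<mu> \<nu> :: "'c::finite valuation"
  assumes eq: "region_equiv M \<mu> \<nu>" and f: "0 \<le> f" "f < 1"
  shows "\<exists>g. 0 \<le> g \<and> g < 1 \<and> region_equiv M (delay \<mu> f) (delay \<nu> g)"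
proof -
  obtain b where b: "0 < b" "b \<le> 1" "b = 1 \<longleftrightarrow> f = 0"
    and threshold: "\<And>x. \<mu> x \<le> real M \<Longrightarrow>
      (frac (\<mu> x) < 1 - f \<longleftrightarrow> frac (\<nu> x) < b) \<and> (frac (\<mu> x) = 1 - f \<longleftrightarrow> frac (\<nu> x) = b)"
    using region_equiv_threshold[OF eq, of "1 - f"] f by auto
  have "frac (\<mu> x) + f < 1 \<longleftrightarrow> frac (\<nu> x) + (1 - b) < 1"
    and "frac (\<mu> x) + f = 1 \<longleftrightarrow> frac (\<nu> x) + (1 - b) = 1" if "\<mu> x \<le> real M" for x
    using threshold[OF that] by linarith+
  then have "region_equiv M (delay \<mu> f) (delay \<nu> (1 - b))"
    using b by (intro region_equiv_delay_lt_1_matching[OF eq f]) auto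
  then show ?thesis using b by (intro exI[of _ "1 - b"]) auto
qed

lemma region_equiv_delay:
  fixes \<mu> \<nu> :: "'c::finite valuation"
  assumes eq: "region_equiv M \<mu> \<nu>" and "0 \<le> e"
  shows "\<exists>d\<ge>0. region_equiv M (delay \<mu> e) (delay \<nu> d)"
proof -
  obtain g where g: "0 \<le> g" "region_equiv M (delay \<mu> (frac e)) (delay \<nu> g)"
    using region_equiv_delay_lt_1[OF eq, of "frac e"] by (auto simp: frac_lt_1)
  have "e = frac e + real (nat \<lfloor>e\<rfloor>)" using \<open>0 \<le> e\<close> by (simp add: frac_def)
  then have "delay \<mu> e = delay (delay \<mu> (frac e)) (real (nat \<lfloor>e\<rfloor>))"
    unfolding delay_def by (metis add.assoc)
  moreover have "delay (delay \<nu> g) (real (nat \<lfloor>e\<rfloor>)) = delay \<nu> (g + real (nat \<lfloor>e\<rfloor>))"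
    unfolding delay_def by (simp add: add.assoc)
  ultimately show ?thesis
    using region_equiv_delay_nat[OF g(2)] g(1) by (metis add_nonneg_nonneg of_nat_0_le_iff)
qed

lemma delay_into_region:
  fixes \<mu> \<nu> :: "'c::finite valuation"
  assumes r: "r \<in> regions M" and r': "r' \<in> regions M"
    and "\<mu> \<in> r" "0 \<le> e" "delay \<mu> e \<in> r'" and "\<nu> \<in> r"
  shows "\<exists>d\<ge>0. delay \<nu> d \<in> r'"
proof -
  obtain d where d: "0 \<le> d" "region_equiv M (delay \<mu> e) (delay \<nu> d)"
    using region_equiv_delay region_equiv_of_mem_region(1)[OF r] assms by blast
  have "nonneg_val (delay \<nu> d)"
    using region_equiv_of_mem_region(2)[OF r] assms d(1) by (simp add: nonneg_val_def delay_def)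
  with d have "delay \<nu> d \<in> region_of M (delay \<mu> e)" by (simp add: region_of_def)
  with d(1) show ?thesis using region_of_mem_region[OF r'] assms by auto
qed

section \<open>Convex combinations of plays\<close>

lemma delay_convex_comb:
  "delay (\<lambda>x. (1 - t) * u x + t * v x) ((1 - t) * d + t * e) =
     (\<lambda>x. (1 - t) * delay u d x + t * delay v e x)"
  by (simp add: delay_def algebra_simps)

lemma reset_convex_comb:
  "reset (\<lambda>x. (1 - t) * u x + t * v x) Y = (\<lambda>x. (1 - t) * reset u Y x + t * reset v Y x)"
  by (auto simp: reset_def)

lemma play_weight_convex_comb:
  "play_weight G n ss (\<lambda>i. (1 - t) * a i + t * b i) \<delta>s =
     (1 - t) * play_weight G n ss a \<delta>s + t * play_weight G n ss b \<delta>s"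
  unfolding play_weight_def sum_distrib_left sum.distrib[symmetric]
  by (rule sum.cong) (simp_all add: algebra_simps)

text \<open>\<open>R i\<close> is the region \<open>r''\<^sub>i\<close> of the paper, in which the delay of the \<open>i\<close>-th step ends.\<close>

locale region_path =
  fixes G :: "('s, 'c::finite) wtg" and M n :: nat and ss :: "nat \<Rightarrow> 's"
    and rs R :: "nat \<Rightarrow> 'c valuation set" and \<delta>s :: "nat \<Rightarrow> ('s, 'c) transition"
  assumes regions: "i \<in> {1..Suc n} \<Longrightarrow> rs i \<in> regions M"
    and transition: "i \<in> {1..n} \<Longrightarrow> \<delta>s i \<in> Trans G \<and> src (\<delta>s i) = ss i \<and> tgt (\<delta>s i) = ss (Suc i)"
    and time_successor: "i \<in> {1..n} \<Longrightarrow> R i \<in> regions M \<and> (\<exists>\<nu>\<in>rs i. \<exists>d\<ge>0. delay \<nu> d \<in> R i)"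
    and guard: "i \<in> {1..n} \<Longrightarrow> \<nu> \<in> R i \<Longrightarrow> sat \<nu> (guard_of (\<delta>s i))"
    and reset_image: "i \<in> {1..n} \<Longrightarrow> (\<lambda>\<nu>. reset \<nu> (resets_of (\<delta>s i))) ` R i = rs (Suc i)"
begin

text \<open>\<open>along id\<close> describes plays of the game through the regions of the path,
\<open>along closure\<close> plays of the closed game through their closures, such as the corner play.\<close>

definition along :: "('c valuation set \<Rightarrow> 'c valuation set) \<Rightarrow> (nat \<Rightarrow> 'c valuation)
    \<Rightarrow> (nat \<Rightarrow> real) \<Rightarrow> bool" where
  "along F \<nu>s ds \<longleftrightarrow> \<nu>s 0 \<in> F (rs 1) \<and>
     (\<forall>i\<in>{1..n}. 0 \<le> ds i \<and> delay (\<nu>s (i - 1)) (ds i) \<in> F (R i) \<and> \<nu>s i \<in> F (rs (Suc i)) \<and>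
        reset (delay (\<nu>s (i - 1)) (ds i)) (resets_of (\<delta>s i)) = \<nu>s i)"

lemma along_id_play:
  assumes "along id \<nu>s ds"
  shows "is_play False G n ss \<delta>s \<nu>s ds" "follows M n rs \<nu>s"
proof -
  have mem: "\<nu>s j \<in> rs (Suc j)" if "j \<le> n" for j
    using assms that unfolding along_def by (cases j) auto
  have "nonneg_val (\<nu>s 0)"
    using region_equiv_of_mem_region(2)[OF regions] mem[of 0] by fastforce
  then show "is_play False G n ss \<delta>s \<nu>s ds"
    using assms transition guard unfolding along_def is_play_def step_def by auto
  have "\<nu>s (i - 1) \<in> rs i" if "i \<in> {1..Suc n}" for i
    using mem[of "i - 1"] that by force
  then have "region_of M (\<nu>s (i - 1)) = rs i" if "i \<in> {1..Suc n}" for i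
    using region_of_mem_region[OF regions] that by blast
  then show "follows M n rs \<nu>s" unfolding follows_def by blast
qed

lemma along_id_exists: "\<exists>\<nu>s ds. along id \<nu>s ds"
proof -
  obtain \<nu>0 where \<nu>0: "\<nu>0 \<in> rs 1"
    using regions[of 1] mem_region_of_self unfolding regions_def by fastforce
  have "\<exists>d\<ge>0. delay \<nu> d \<in> R i" if "i \<in> {1..n}" "\<nu> \<in> rs i" for i \<nu>
    using time_successor[OF that(1)] regions[of i] that delay_into_region by fastforce
  then obtain D where D: "\<And>i \<nu>. i \<in> {1..n} \<Longrightarrow> \<nu> \<in> rs i \<Longrightarrow> 0 \<le> D i \<nu> \<and> delay \<nu> (D i \<nu>) \<in> R i"
    by metis
  define \<nu>s where "\<nu>s = rec_nat \<nu>0 (\<lambda>i \<nu>. reset (delay \<nu> (D (Suc i) \<nu>)) (resets_of (\<delta>s (Suc i))))"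
  define ds where "ds i = D i (\<nu>s (i - 1))" for i
  have \<nu>s_Suc: "\<nu>s (Suc j) = reset (delay (\<nu>s j) (ds (Suc j))) (resets_of (\<delta>s (Suc j)))" for j
    by (simp add: \<nu>s_def ds_def)
  have step: "0 \<le> ds (Suc j) \<and> delay (\<nu>s j) (ds (Suc j)) \<in> R (Suc j)"
    if "Suc j \<le> n" "\<nu>s j \<in> rs (Suc j)" for j
    using D that by (simp add: ds_def)
  have mem: "\<nu>s j \<in> rs (Suc j)" if "j \<le> n" for j
    using that
  proof (induction j)
    case 0
    then show ?case using \<nu>0 by (simp add: \<nu>s_def)
  next
    case (Suc j)
    then show ?case unfolding \<nu>s_Suc using step[of j] reset_image[of "Suc j"] by auto
  qed
  have "0 \<le> ds i \<and> delay (\<nu>s (i - 1)) (ds i) \<in> R i \<and> \<nu>s i \<in> rs (Suc i) \<and>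
      reset (delay (\<nu>s (i - 1)) (ds i)) (resets_of (\<delta>s i)) = \<nu>s i" if i: "i \<in> {1..n}" for i
  proof -
    obtain j where "i = Suc j" using i by (cases i) auto
    then show ?thesis using i step[of j] mem[of j] mem[of i] \<nu>s_Suc[of j] by simp
  qed
  then have "along id \<nu>s ds" using \<nu>0 unfolding along_def by (simp add: \<nu>s_def)
  then show ?thesis by blast
qed

lemma along_convex_comb:
  assumes u: "along id u d" and v: "along closure v e" and t: "0 \<le> t" "t < 1"
  shows "along id (\<lambda>i x. (1 - t) * u i x + t * v i x) (\<lambda>i. (1 - t) * d i + t * e i)"
proof -
  have "(\<lambda>x. (1 - t) * u 0 x + t * v 0 x) \<in> rs 1"
    using u v convex_comb_mem_region[OF regions _ _ t] unfolding along_def by simp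
  moreover have "0 \<le> (1 - t) * d i + t * e i \<and>
      delay (\<lambda>x. (1 - t) * u (i - 1) x + t * v (i - 1) x) ((1 - t) * d i + t * e i) \<in> R i \<and>
      (\<lambda>x. (1 - t) * u i x + t * v i x) \<in> rs (Suc i) \<and>
      reset (delay (\<lambda>x. (1 - t) * u (i - 1) x + t * v (i - 1) x) ((1 - t) * d i + t * e i))
        (resets_of (\<delta>s i)) = (\<lambda>x. (1 - t) * u i x + t * v i x)" if i: "i \<in> {1..n}" for i
  proof -
    have u_i: "0 \<le> d i" "delay (u (i - 1)) (d i) \<in> R i" "u i \<in> rs (Suc i)"
      "reset (delay (u (i - 1)) (d i)) (resets_of (\<delta>s i)) = u i"
      using u i unfolding along_def by auto
    have v_i: "0 \<le> e i" "delay (v (i - 1)) (e i) \<in> closure (R i)" "v i \<in> closure (rs (Suc i))"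
      "reset (delay (v (i - 1)) (e i)) (resets_of (\<delta>s i)) = v i"
      using v i unfolding along_def by auto
    show ?thesis
      using u_i v_i t i
        convex_comb_mem_region[OF conjunct1[OF time_successor[OF i]] u_i(2) v_i(2) t]
        convex_comb_mem_region[OF regions u_i(3) v_i(3) t]
      by (simp add: delay_convex_comb reset_convex_comb)
  qed
  ultimately show ?thesis unfolding along_def by simp
qed

end

lemma corner_play_region_path:
  assumes cycle: "is_region_cycle G M n ss rs \<delta>s" and play: "is_play True G n ss \<delta>s \<nu>s ds"
    and corners: "follows_corners G M n rs \<delta>s \<nu>s ds" and start: "\<nu>s 0 \<in> closure (rs 1)"
  obtains R where "region_path G M n ss rs R \<delta>s" "region_path.along n rs R \<delta>s closure \<nu>s ds"
proof -
  obtain R where R: "\<And>i. i \<in> {1..n} \<Longrightarrow> R i \<in> regions M \<and>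
      (\<exists>\<nu>\<in>rs i. \<exists>d\<ge>0. delay \<nu> d \<in> R i) \<and> (\<forall>\<nu>\<in>R i. sat \<nu> (guard_of (\<delta>s i))) \<and>
      (\<lambda>\<nu>. reset \<nu> (resets_of (\<delta>s i))) ` R i = rs (Suc i) \<and>
      delay (\<nu>s (i - 1)) (ds i) \<in> closure (R i) \<and> \<nu>s i \<in> closure (rs (Suc i))"
    using corners unfolding follows_corners_def by metis
  have "rs i \<in> regions M" if "i \<in> {1..Suc n}" for i
    using cycle that unfolding is_region_cycle_def reg_trans_def
    by (cases "i = Suc n") auto
  then have path: "region_path G M n ss rs R \<delta>s"
    using cycle R unfolding is_region_cycle_def reg_trans_def by unfold_locales auto
  moreover have "region_path.along n rs R \<delta>s closure \<nu>s ds"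
    using play R start unfolding region_path.along_def[OF path] is_play_def step_def by auto
  ultimately show thesis by (rule that)
qed

theorem lemma1:
  fixes G :: "('s, 'c::finite) wtg" and M n :: nat
    and ss :: "nat \<Rightarrow> 's" and rs :: "nat \<Rightarrow> 'c valuation set"
    and \<delta>s :: "nat \<Rightarrow> ('s, 'c) transition"
    and \<nu>bar :: "nat \<Rightarrow> 'c valuation" and dbar :: "nat \<Rightarrow> real"
    and \<epsilon> :: real
  assumes "wf_wtg G M"
    and "is_region_cycle G M n ss rs \<delta>s"
    and "is_play True G n ss \<delta>s \<nu>bar dbar"
    and "follows_corners G M n rs \<delta>s \<nu>bar dbar"
    and "is_corner (\<nu>bar 0) (rs 1)" and "is_corner (\<nu>bar n) (rs 1)"
    and "\<epsilon> > 0"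
  shows "\<exists>\<nu>s ds. is_play False G n ss \<delta>s \<nu>s ds \<and> follows M n rs \<nu>s \<and>
           \<bar>play_weight G n ss ds \<delta>s - play_weight G n ss dbar \<delta>s\<bar> \<le> \<epsilon>"
proof -
  obtain R where path: "region_path G M n ss rs R \<delta>s"
    and corner_play: "region_path.along n rs R \<delta>s closure \<nu>bar dbar"
    using corner_play_region_path assms(2-5) unfolding is_corner_def by blast
  interpret region_path G M n ss rs R \<delta>s by (fact path)
  obtain \<nu>s ds where interior_play: "along id \<nu>s ds" using along_id_exists by blast
  obtain t where t: "0 \<le> t" "t < 1" and close:
    "\<bar>(1 - t) * play_weight G n ss ds \<delta>s + t * play_weight G n ss dbar \<delta>s
       - play_weight G n ss dbar \<delta>s\<bar> \<le> \<epsilon>"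
    using convex_comb_close assms(7) by blast
  have "along id (\<lambda>i x. (1 - t) * \<nu>s i x + t * \<nu>bar i x) (\<lambda>i. (1 - t) * ds i + t * dbar i)"
    using along_convex_comb[OF interior_play corner_play t] .
  then show ?thesis
    using along_id_play close unfolding play_weight_convex_comb[symmetric] by blast
qed

end
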